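(* For integers $0\le k\le n-1$ and $\lambda\in\mathbb C$, \[ d^k_n(\lambda)=n\,d^k_{n-1}(\lambda)+(\lambda-1)\,d^{k-1}_{n-2}(\lambda), \] where for $k=0$ the convention $d^{-1}_m(\lambda)=(\lambda-1)^{m+1}$ (for $m\ge -1$) is used.
   Context: For $\lambda\in\mathbb C$ and integers $0\le k\le n$, define $e^k_n(\lambda)$ by $e^n_n(\lambda)=n!$ and, for $1\le k\le n$, $e^{k-1}_n(\lambda)=e^k_n(\lambda)+(\lambda-1)e^{k-1}_{n-1}(\lambda)$. Put $d^k_n(\lambda)=e^k_n(\lambda)/k!$. (For nonnegative integer $\lambda$, $d^k_n(\lambda)$ counts permutations of $[n]$ whose first $k$ entries are decreasing, where each fixed point among the last $n-k$ positions is given one of $\lambda$ colours.) *)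

theory Defs
  imports Complex_Main
begin

text \<open>e_n^k(lambda), written e_num lam n k, meaningful for 0 <= k <= n.
  e_n^n = n!, and for k < n: e_n^k = e_n^(k+1) + (lam - 1) e_(n-1)^k
  (the recursion e^(k-1)_n = e^k_n + (lam-1) e^(k-1)_(n-1) with k shifted).
  Values for k > n are irrelevant (set to n!).\<close>
function e_num :: "complex \<Rightarrow> nat \<Rightarrow> nat \<Rightarrow> complex" where
  "e_num lam n k =
     (if n \<le> k then of_nat (fact n)
      else e_num lam n (Suc k) + (lam - 1) * e_num lam (n - 1) k)"
  by auto
termination
  by (relation "measures [\<lambda>(_, n, _). n, \<lambda>(_, n, k). n - k]") auto

declare e_num.simps [simp del]

definition d_num :: "complex \<Rightarrow> nat \<Rightarrow> nat \<Rightarrow> complex" where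
  "d_num lam n k = e_num lam n k / of_nat (fact k)"

end

theory Submission
  imports Defs
begin

text \<open>Write \<open>x = \<lambda> - 1\<close> and \<open>e(n,k)\<close> for \<open>e_num \<lambda> n k\<close>. The core identity
  \<open>e(m+2,k+1) = (m+2) e(m+1,k+1) + (k+1) x e(m,k)\<close> is proved through its defect \<open>D(m,k)\<close>
  (left minus right side): \<open>D\<close> vanishes on the diagonal \<open>k = m\<close>, where every term is a
  factorial, and the defining recursion alone gives \<open>D(m+1,k) = D(m+1,k+1) + x D(m,k)\<close>, so \<open>D\<close>
  vanishes by induction on \<open>m\<close> and downward induction on \<open>k\<close>. For \<open>k = 0\<close> the defect of
  \<open>e(n+1,0) = (n+1) e(n,0) + x\<^sup>n\<^sup>+\<^sup>1\<close> is multiplied by \<open>x\<close> at each step, up to the term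
  \<open>D(n,0) = 0\<close>. Dividing by \<open>k!\<close> turns both identities into the statements about \<open>d\<close>.\<close>

lemma e_num_diag: "e_num lam n n = of_nat (fact n)"
  by (subst e_num.simps) simp

lemma e_num_step:
  "k < n \<Longrightarrow> e_num lam n k = e_num lam n (Suc k) + (lam - 1) * e_num lam (n - 1) k"
  by (subst e_num.simps) simp

definition e_num_defect :: "complex \<Rightarrow> nat \<Rightarrow> nat \<Rightarrow> complex" where
  "e_num_defect lam m k =
     e_num lam (m + 2) (k + 1)
     - (of_nat (m + 2) * e_num lam (m + 1) (k + 1) + of_nat (k + 1) * (lam - 1) * e_num lam m k)"

lemma e_num_defect_diag: "e_num_defect lam m m = 0"
proof -
  have "e_num lam (m + 2) (m + 1) = of_nat (fact (m + 2)) + (lam - 1) * of_nat (fact (m + 1))"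
    using e_num_step[of "m + 1" "m + 2" lam] by (simp add: e_num_diag)
  then show ?thesis
    by (simp add: e_num_defect_def e_num_diag algebra_simps)
qed

lemma e_num_defect_Suc:
  assumes "k \<le> m"
  shows "e_num_defect lam (Suc m) k =
           e_num_defect lam (Suc m) (Suc k) + (lam - 1) * e_num_defect lam m k"
proof -
  have r1: "e_num lam (m + 3) (k + 1) =
              e_num lam (m + 3) (k + 2) + (lam - 1) * e_num lam (m + 2) (k + 1)"
    and r2: "e_num lam (m + 2) (k + 1) =
              e_num lam (m + 2) (k + 2) + (lam - 1) * e_num lam (m + 1) (k + 1)"
    and r3: "e_num lam (m + 1) k = e_num lam (m + 1) (k + 1) + (lam - 1) * e_num lam m k"
    using assms e_num_step[of "k + 1" "m + 3" lam] e_num_step[of "k + 1" "m + 2" lam]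
      e_num_step[of k "m + 1" lam]
    by simp_all
  have "e_num_defect lam (Suc m) k - e_num_defect lam (Suc m) (Suc k) - (lam - 1) * e_num_defect lam m k
    = (e_num lam (m + 3) (k + 1) - e_num lam (m + 3) (k + 2)
         - (lam - 1) * e_num lam (m + 2) (k + 1))
      - of_nat (m + 3) * (e_num lam (m + 2) (k + 1) - e_num lam (m + 2) (k + 2)
         - (lam - 1) * e_num lam (m + 1) (k + 1))
      - of_nat (k + 1) * (lam - 1) * (e_num lam (m + 1) k - e_num lam (m + 1) (k + 1)
         - (lam - 1) * e_num lam m k)"
    by (simp add: e_num_defect_def algebra_simps numeral_3_eq_3)
  also have "\<dots> = 0" using r1 r2 r3 by simp
  finally show ?thesis by (simp add: algebra_simps)
qed

lemma e_num_defect_eq_0: "k \<le> m \<Longrightarrow> e_num_defect lam m k = 0"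
proof (induction m arbitrary: k)
  case 0
  then show ?case using e_num_defect_diag[of lam 0] by simp
next
  case (Suc m)
  show ?case using Suc.prems
  proof (induction k rule: inc_induct)
    case base
    show ?case by (rule e_num_defect_diag)
  next
    case (step k)
    then show ?case using e_num_defect_Suc[of k m lam] Suc.IH[of k] by simp
  qed
qed

lemma e_num_Suc_Suc:
  "k \<le> m \<Longrightarrow> e_num lam (m + 2) (k + 1) =
     of_nat (m + 2) * e_num lam (m + 1) (k + 1) + of_nat (k + 1) * (lam - 1) * e_num lam m k"
  using e_num_defect_eq_0[of k m lam] by (simp add: e_num_defect_def)

lemma e_num_Suc_0: "e_num lam (Suc n) 0 = of_nat (Suc n) * e_num lam n 0 + (lam - 1) ^ Suc n"
proof (induction n)
  case 0
  then show ?case using e_num_step[of 0 1 lam] by (simp add: e_num_diag)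
next
  case (Suc n)
  have r1: "e_num lam (n + 2) 0 = e_num lam (n + 2) 1 + (lam - 1) * e_num lam (n + 1) 0"
    and r2: "e_num lam (n + 1) 0 = e_num lam (n + 1) 1 + (lam - 1) * e_num lam n 0"
    using e_num_step[of 0 "n + 2" lam] e_num_step[of 0 "n + 1" lam] by simp_all
  have "e_num lam (n + 2) 0 - (of_nat (n + 2) * e_num lam (n + 1) 0 + (lam - 1) ^ (n + 2))
    = (e_num lam (n + 2) 0 - e_num lam (n + 2) 1 - (lam - 1) * e_num lam (n + 1) 0)
      - of_nat (n + 2) * (e_num lam (n + 1) 0 - e_num lam (n + 1) 1 - (lam - 1) * e_num lam n 0)
      + e_num_defect lam n 0
      + (lam - 1) * (e_num lam (n + 1) 0 - (of_nat (n + 1) * e_num lam n 0 + (lam - 1) ^ (n + 1)))"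
    by (simp add: e_num_defect_def algebra_simps)
  also have "\<dots> = 0"
    using r1 r2 e_num_defect_eq_0[of 0 n lam] Suc.IH by simp
  finally show ?case by (simp add: algebra_simps)
qed

lemma d_num_Suc_Suc:
  assumes "k \<le> m"
  shows "d_num lam (m + 2) (k + 1) =
           of_nat (m + 2) * d_num lam (m + 1) (k + 1) + (lam - 1) * d_num lam m k"
proof -
  define c :: complex where "c = of_nat (k + 1)"
  define F :: complex where "F = of_nat (fact k)"
  have nonzero: "c \<noteq> 0" "F \<noteq> 0"
    unfolding c_def F_def by (metis Suc_eq_plus1 of_nat_neq_0, simp)
  have fact_Suc_k: "of_nat (fact (k + 1)) = c * F"
    unfolding c_def F_def by (simp add: algebra_simps)
  have e_eq: "e_num lam (m + 2) (k + 1) =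
      of_nat (m + 2) * e_num lam (m + 1) (k + 1) + c * (lam - 1) * e_num lam m k"
    unfolding c_def by (rule e_num_Suc_Suc[OF assms])
  show ?thesis
    using nonzero unfolding d_num_def fact_Suc_k F_def[symmetric] e_eq by (simp add: field_simps)
qed

lemma d_num_Suc_0: "d_num lam (Suc n) 0 = of_nat (Suc n) * d_num lam n 0 + (lam - 1) ^ Suc n"
  using e_num_Suc_0 by (simp add: d_num_def)

theorem mainTheorem5:
  fixes lam :: complex and n k :: nat
  assumes "k \<le> n - 1" and "1 \<le> n"
  shows "d_num lam n k =
           of_nat n * d_num lam (n - 1) k
           + (lam - 1) * (if k = 0 then (lam - 1) ^ (n - 1) else d_num lam (n - 2) (k - 1))"
proof (cases k)
  case 0
  obtain m where "n = Suc m" using assms(2) by (cases n) auto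
  with 0 show ?thesis using d_num_Suc_0[of lam m] by simp
next
  case (Suc j)
  define m where "m = n - 2"
  have "n = m + 2" "j \<le> m" using assms Suc unfolding m_def by auto
  with Suc show ?thesis using d_num_Suc_Suc[of j m lam] by simp
qed

end
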